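(* (i) For every integer $n\ge 2$ there exists a graph $G$ with $B_{dom}(G)=n$. (ii) There exist graphs $G$ and $H$ with the same dominated chromatic number for which $|B_{dom}(G)-B_{dom}(H)|$ is arbitrarily large; that is, for every positive integer $N$ there exist graphs $G,H$ with $\chi_{dom}(G)=\chi_{dom}(H)$ and $|B_{dom}(G)-B_{dom}(H)|\ge N$.
   Context: A dominated coloring of a graph is a proper coloring in which every color class is dominated by at least one vertex, i.e. for each color class $C$ there is a vertex adjacent to every vertex of $C$; $\chi_{dom}(G)$ is the minimum number of colors in a dominated coloring. The dom-bondage number $B_{dom}(G)$ is the minimum number of edges of $G$ whose removal changes the dominated chromatic number of $G$. *)

theory Defs
  imports Main "HOL-Library.Extended_Nat"
begin

definition simple_graph :: "nat set \<Rightarrow> nat set set \<Rightarrow> bool" where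
  "simple_graph V E \<longleftrightarrow> finite V \<and>
     (\<forall>e\<in>E. \<exists>u v. e = {u, v} \<and> u \<noteq> v \<and> u \<in> V \<and> v \<in> V)"

definition no_isolated :: "nat set \<Rightarrow> nat set set \<Rightarrow> bool" where
  "no_isolated V E \<longleftrightarrow> (\<forall>v\<in>V. \<exists>u. {u, v} \<in> E)"

definition dominated_coloring :: "nat set \<Rightarrow> nat set set \<Rightarrow> nat \<Rightarrow> (nat \<Rightarrow> nat) \<Rightarrow> bool" where
  "dominated_coloring V E k c \<longleftrightarrow>
     (\<forall>v\<in>V. c v < k) \<and>
     (\<forall>u\<in>V. \<forall>v\<in>V. {u, v} \<in> E \<longrightarrow> c u \<noteq> c v) \<and>
     (\<forall>i<k. \<exists>w\<in>V. \<forall>v\<in>V. c v = i \<longrightarrow> {w, v} \<in> E)"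

text \<open>Dominated chromatic number; infinity if no dominated coloring exists
(e.g. when there is an isolated vertex).\<close>

definition chi_dom :: "nat set \<Rightarrow> nat set set \<Rightarrow> enat" where
  "chi_dom V E = (INF k \<in> {k. \<exists>c. dominated_coloring V E k c}. enat k)"

definition B_dom :: "nat set \<Rightarrow> nat set set \<Rightarrow> enat" where
  "B_dom V E = (INF F \<in> {F. F \<subseteq> E \<and> chi_dom V (E - F) \<noteq> chi_dom V E}. enat (card F))"

end

theory Submission
  imports Defs
begin

text \<open>Use complete bipartite graphs \<open>K(A, B)\<close>. Colouring the two sides differently is a
dominated colouring as long as each side still has a vertex adjacent to the whole other side.
Deleting fewer than \<open>min |A| |B|\<close> edges leaves such an untouched vertex on both sides, so
\<open>\<chi>\<^sub>d\<^sub>o\<^sub>m\<close> stays 2; deleting the \<open>min |A| |B|\<close> edges at one vertex of the larger side isolates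
it, and a graph with an isolated vertex has no dominated colouring at all (\<open>\<chi>\<^sub>d\<^sub>o\<^sub>m = \<infinity>\<close>).
So \<open>K(n, n)\<close> has \<open>\<chi>\<^sub>d\<^sub>o\<^sub>m = 2\<close> and \<open>B\<^sub>d\<^sub>o\<^sub>m = n\<close>; for (ii) compare \<open>K(N+1, N+1)\<close> with \<open>K(1, 1)\<close>.\<close>

lemma chi_dom_eqI:
  assumes "dominated_coloring V E k c"
    and "\<And>k' c'. k' < k \<Longrightarrow> \<not> dominated_coloring V E k' c'"
  shows "chi_dom V E = enat k"
  unfolding chi_dom_def
proof (rule antisym)
  show "(INF k \<in> {k. \<exists>c. dominated_coloring V E k c}. enat k) \<le> enat k"
    using assms(1) by (auto intro: INF_lower2)
  show "enat k \<le> (INF k \<in> {k. \<exists>c. dominated_coloring V E k c}. enat k)"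
  proof (rule INF_greatest)
    fix k' assume "k' \<in> {k. \<exists>c. dominated_coloring V E k c}"
    with assms(2) show "enat k \<le> enat k'" by (auto simp: not_less[symmetric])
  qed
qed

lemma chi_dom_isolated_vertex:
  assumes "v \<in> V" and "\<And>u. {u, v} \<notin> E"
  shows "chi_dom V E = \<infinity>"
proof -
  have "\<not> dominated_coloring V E k c" for k c
  proof
    assume col: "dominated_coloring V E k c"
    then have "c v < k" using \<open>v \<in> V\<close> by (simp add: dominated_coloring_def)
    with col obtain w where "\<forall>u\<in>V. c u = c v \<longrightarrow> {w, u} \<in> E"
      by (auto simp: dominated_coloring_def)
    with assms \<open>v \<in> V\<close> show False by blast
  qed
  then show ?thesis by (simp add: chi_dom_def top_enat_def)
qed

lemma dominated_coloring_edge_imp_two_le: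
  assumes "dominated_coloring V E k c" and "u \<in> V" "v \<in> V" "{u, v} \<in> E"
  shows "2 \<le> k"
proof -
  from assms have "c u < k" "c v < k" "c u \<noteq> c v" by (auto simp: dominated_coloring_def)
  then show ?thesis by linarith
qed

lemma B_dom_eqI:
  assumes "F \<subseteq> E" "card F = k" "chi_dom V (E - F) \<noteq> chi_dom V E"
    and "\<And>F'. F' \<subseteq> E \<Longrightarrow> card F' < k \<Longrightarrow> chi_dom V (E - F') = chi_dom V E"
  shows "B_dom V E = enat k"
  unfolding B_dom_def
proof (rule antisym)
  show "(INF F \<in> {F. F \<subseteq> E \<and> chi_dom V (E - F) \<noteq> chi_dom V E}. enat (card F)) \<le> enat k"
    using assms(1-3) by (auto intro: INF_lower2)
  show "enat k \<le> (INF F \<in> {F. F \<subseteq> E \<and> chi_dom V (E - F) \<noteq> chi_dom V E}. enat (card F))"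
  proof (rule INF_greatest)
    fix F assume "F \<in> {F. F \<subseteq> E \<and> chi_dom V (E - F) \<noteq> chi_dom V E}"
    with assms(4) show "enat k \<le> enat (card F)" by (auto simp: not_less[symmetric])
  qed
qed

definition complete_bipartite :: "'a set \<Rightarrow> 'a set \<Rightarrow> 'a set set" where
  "complete_bipartite A B = {{a, b} | a b. a \<in> A \<and> b \<in> B}"

lemma complete_bipartite_commute: "complete_bipartite A B = complete_bipartite B A"
  unfolding complete_bipartite_def by (auto simp: insert_commute)

lemma finite_complete_bipartite:
  assumes "finite A" "finite B"
  shows "finite (complete_bipartite A B)"
proof -
  have "complete_bipartite A B = (\<lambda>(a, b). {a, b}) ` (A \<times> B)"
    unfolding complete_bipartite_def by force
  with assms show ?thesis by simp
qed

lemma simple_graph_complete_bipartite: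
  assumes "finite A" "finite B" "A \<inter> B = {}"
  shows "simple_graph (A \<union> B) (complete_bipartite A B)"
  unfolding simple_graph_def
proof (intro conjI ballI)
  show "finite (A \<union> B)" using assms(1,2) by simp
  fix e assume "e \<in> complete_bipartite A B"
  then obtain a b where "e = {a, b}" "a \<in> A" "b \<in> B"
    unfolding complete_bipartite_def by blast
  with assms(3) show "\<exists>u v. e = {u, v} \<and> u \<noteq> v \<and> u \<in> A \<union> B \<and> v \<in> A \<union> B"
    by blast
qed

lemma no_isolated_complete_bipartite:
  assumes "A \<noteq> {}" "B \<noteq> {}"
  shows "no_isolated (A \<union> B) (complete_bipartite A B)"
  unfolding no_isolated_def
proof
  fix v assume "v \<in> A \<union> B"
  then consider "v \<in> A" | "v \<in> B" by blast
  then show "\<exists>u. {u, v} \<in> complete_bipartite A B"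
  proof cases
    case 1
    obtain b where "b \<in> B" using assms(2) by blast
    with 1 have "{v, b} \<in> complete_bipartite A B" unfolding complete_bipartite_def by blast
    then show ?thesis by (metis insert_commute)
  next
    case 2
    obtain a where "a \<in> A" using assms(1) by blast
    with 2 show ?thesis unfolding complete_bipartite_def by blast
  qed
qed

lemma complete_bipartite_untouched_vertex:
  assumes "A \<inter> B = {}" "finite F" "F \<subseteq> complete_bipartite A B" "card F < card A"
  obtains a where "a \<in> A" "\<forall>e\<in>F. a \<notin> e"
proof -
  have "card (e \<inter> A) = 1" if "e \<in> F" for e
  proof -
    from that assms(1,3) obtain a b where "e = {a, b}" "a \<in> A" "b \<notin> A"
      unfolding complete_bipartite_def by blast
    then show ?thesis by auto
  qed
  then have "card (\<Union>e\<in>F. e \<inter> A) \<le> card F"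
    using card_UN_le[OF assms(2), of "\<lambda>e. e \<inter> A"] by simp
  moreover have "finite A" using assms(4) card.infinite by force
  ultimately have "\<not> A \<subseteq> (\<Union>e\<in>F. e \<inter> A)"
    using assms(4) card_mono[of "\<Union>e\<in>F. e \<inter> A" A] by auto
  with that show thesis by blast
qed

lemma dominated_coloring_bipartition:
  assumes "A \<inter> B = {}" "E \<subseteq> complete_bipartite A B"
    and "a \<in> A" "\<forall>b\<in>B. {a, b} \<in> E" and "b \<in> B" "\<forall>a\<in>A. {a, b} \<in> E"
  shows "dominated_coloring (A \<union> B) E 2 (\<lambda>v. if v \<in> A then 0 else 1)"
  unfolding dominated_coloring_def
proof (intro conjI ballI allI impI)
  fix u v assume "{u, v} \<in> E"
  with assms(2) obtain x y where "{u, v} = {x, y}" "x \<in> A" "y \<in> B"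
    unfolding complete_bipartite_def by blast
  with assms(1) show "(if u \<in> A then 0 else 1) \<noteq> (if v \<in> A then 0 else (1::nat))"
    by (auto simp: doubleton_eq_iff)
next
  fix i :: nat assume "i < 2"
  then consider "i = 0" | "i = 1" by linarith
  then show "\<exists>w\<in>A \<union> B. \<forall>v\<in>A \<union> B. (if v \<in> A then 0 else 1) = i \<longrightarrow> {w, v} \<in> E"
  proof cases
    case 1
    have "{b, v} \<in> E" if "v \<in> A" for v
      using assms(6) that by (metis insert_commute)
    with 1 assms(5) show ?thesis by auto
  next
    case 2
    with assms(3,4) show ?thesis by auto
  qed
qed simp

lemma chi_dom_complete_bipartite_minus_few:
  assumes "finite A" "finite B" "A \<inter> B = {}"
    and "F \<subseteq> complete_bipartite A B" "card F < min (card A) (card B)"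
  shows "chi_dom (A \<union> B) (complete_bipartite A B - F) = enat 2"
proof -
  let ?E = "complete_bipartite A B - F"
  have "finite F" using assms(1,2,4) finite_complete_bipartite finite_subset by blast
  obtain a where a: "a \<in> A" "\<forall>e\<in>F. a \<notin> e"
    using complete_bipartite_untouched_vertex[of A B F] assms(3-5) \<open>finite F\<close> by auto
  obtain b where b: "b \<in> B" "\<forall>e\<in>F. b \<notin> e"
    using complete_bipartite_untouched_vertex[of B A F] assms(3-5) \<open>finite F\<close>
    by (auto simp: complete_bipartite_commute)
  have a_star: "\<forall>v\<in>B. {a, v} \<in> ?E" and b_star: "\<forall>v\<in>A. {v, b} \<in> ?E"
    using a b unfolding complete_bipartite_def by blast+
  show ?thesis
  proof (rule chi_dom_eqI)
    show "dominated_coloring (A \<union> B) ?E 2 (\<lambda>v. if v \<in> A then 0 else 1)"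
      using assms(3) a(1) a_star b(1) b_star by (intro dominated_coloring_bipartition) auto
    have "{a, b} \<in> ?E" using a(1) b_star by blast
    with a(1) b(1) show "\<not> dominated_coloring (A \<union> B) ?E k c" if "k < 2" for k c
      using that dominated_coloring_edge_imp_two_le[of "A \<union> B" ?E k c a b] by auto
  qed
qed

lemma complete_bipartite_star:
  assumes "A \<inter> B = {}" "a \<in> A"
  shows "(\<lambda>b. {a, b}) ` B \<subseteq> complete_bipartite A B"
    and "card ((\<lambda>b. {a, b}) ` B) = card B"
    and "chi_dom (A \<union> B) (complete_bipartite A B - (\<lambda>b. {a, b}) ` B) = \<infinity>"
proof -
  show "(\<lambda>b. {a, b}) ` B \<subseteq> complete_bipartite A B"
    using assms(2) unfolding complete_bipartite_def by blast
  have "inj_on (\<lambda>b. {a, b}) B"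
    using assms by (auto simp: inj_on_def doubleton_eq_iff)
  then show "card ((\<lambda>b. {a, b}) ` B) = card B" by (rule card_image)
  have "{u, a} \<notin> complete_bipartite A B - (\<lambda>b. {a, b}) ` B" for u
  proof
    assume "{u, a} \<in> complete_bipartite A B - (\<lambda>b. {a, b}) ` B"
    then obtain x y where "{u, a} = {x, y}" "x \<in> A" "y \<in> B" "{u, a} \<notin> (\<lambda>b. {a, b}) ` B"
      unfolding complete_bipartite_def by blast
    with assms show False by (auto simp: doubleton_eq_iff insert_commute)
  qed
  with assms(2) show "chi_dom (A \<union> B) (complete_bipartite A B - (\<lambda>b. {a, b}) ` B) = \<infinity>"
    by (intro chi_dom_isolated_vertex[of a]) auto
qed

lemma B_dom_complete_bipartite:
  assumes "finite A" "finite B" "A \<inter> B = {}" "A \<noteq> {}" "B \<noteq> {}"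
  shows "B_dom (A \<union> B) (complete_bipartite A B) = enat (min (card A) (card B))"
proof -
  let ?E = "complete_bipartite A B"
  have chi: "chi_dom (A \<union> B) ?E = enat 2"
    using chi_dom_complete_bipartite_minus_few[of A B "{}"] assms by (simp add: card_gt_0_iff)
  obtain F where F: "F \<subseteq> ?E" "card F = min (card A) (card B)"
    "chi_dom (A \<union> B) (?E - F) = \<infinity>"
  proof (cases "card A \<le> card B")
    case True
    obtain b where "b \<in> B" using assms(5) by blast
    with assms(3) complete_bipartite_star[of B A b] True that show thesis
      by (auto simp: complete_bipartite_commute Un_commute Int_commute)
  next
    case False
    obtain a where "a \<in> A" using assms(4) by blast
    with assms(3) complete_bipartite_star[of A B a] False that show thesis by auto
  qed
  show ?thesis
  proof (rule B_dom_eqI[OF F(1,2)])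
    show "chi_dom (A \<union> B) (?E - F) \<noteq> chi_dom (A \<union> B) ?E" using F(3) chi by simp
    show "chi_dom (A \<union> B) (?E - F') = chi_dom (A \<union> B) ?E"
      if "F' \<subseteq> ?E" "card F' < min (card A) (card B)" for F'
      using chi_dom_complete_bipartite_minus_few[OF assms(1-3) that] chi by simp
  qed
qed

lemma balanced_complete_bipartite:
  assumes "n \<ge> 1"
  defines "V \<equiv> {..<n} \<union> {n..<2 * n}" and "E \<equiv> complete_bipartite {..<n} {n..<2 * n}"
  shows "simple_graph V E" "no_isolated V E" "chi_dom V E = enat 2" "B_dom V E = enat n"
proof -
  have parts: "finite {..<n}" "finite {n..<2 * n}" "{..<n} \<inter> {n..<2 * n} = {}"
    "{..<n} \<noteq> {}" "{n..<2 * n} \<noteq> {}"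
    using assms(1) by (auto simp: lessThan_empty_iff)
  show "simple_graph V E" "no_isolated V E"
    unfolding V_def E_def
    using simple_graph_complete_bipartite[OF parts(1-3)] no_isolated_complete_bipartite[OF parts(4,5)]
    by auto
  show "chi_dom V E = enat 2"
    unfolding V_def E_def using chi_dom_complete_bipartite_minus_few[of _ _ "{}"] parts assms(1)
    by simp
  show "B_dom V E = enat n"
    unfolding V_def E_def using B_dom_complete_bipartite[OF parts] by simp
qed

theorem mainTheorem15:
  shows "(\<forall>n::nat. n \<ge> 2 \<longrightarrow>
            (\<exists>V E. simple_graph V E \<and> no_isolated V E \<and> B_dom V E = enat n))
       \<and> (\<forall>N::nat. N > 0 \<longrightarrow>
            (\<exists>V E V' E' a b. simple_graph V E \<and> no_isolated V E \<and>
                simple_graph V' E' \<and> no_isolated V' E' \<and>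
                chi_dom V E = chi_dom V' E' \<and>
                B_dom V E = enat a \<and> B_dom V' E' = enat b \<and>
                int N \<le> \<bar>int a - int b\<bar>))"
proof (intro conjI allI impI)
  fix n :: nat assume "n \<ge> 2"
  then show "\<exists>V E. simple_graph V E \<and> no_isolated V E \<and> B_dom V E = enat n"
    using balanced_complete_bipartite[of n] by auto
next
  fix N :: nat
  have "int N \<le> \<bar>int (N + 1) - int 1\<bar>" by simp
  with balanced_complete_bipartite[of "N + 1"] balanced_complete_bipartite[of 1]
  show "\<exists>V E V' E' a b. simple_graph V E \<and> no_isolated V E \<and>
          simple_graph V' E' \<and> no_isolated V' E' \<and> chi_dom V E = chi_dom V' E' \<and>
          B_dom V E = enat a \<and> B_dom V' E' = enat b \<and> int N \<le> \<bar>int a - int b\<bar>"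
    by fastforce
qed

end
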